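(* Let $G$ be a finite dihedral group generated by two involutions $a$ and $b$. Then there is a conjugate $b'=c^{-1}bc$ ($c\in G$) of $b$ such that $a$ and $b'$ generate a Sylow $2$-subgroup of $G$. *)

theory Defs
  imports "HOL-Algebra.Algebra" "HOL-Computational_Algebra.Primes"
begin

definition involution :: "('a, 'b) monoid_scheme \<Rightarrow> 'a \<Rightarrow> bool" where
  "involution G x \<longleftrightarrow> x \<in> carrier G \<and> x \<noteq> \<one>\<^bsub>G\<^esub> \<and> x \<otimes>\<^bsub>G\<^esub> x = \<one>\<^bsub>G\<^esub>"

definition finite_dihedral_group :: "('a, 'b) monoid_scheme \<Rightarrow> bool" where
  "finite_dihedral_group G \<longleftrightarrow> group G \<and> finite (carrier G) \<and>
     (\<exists>r s. r \<in> carrier G \<and> involution G s \<and>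
            s \<otimes>\<^bsub>G\<^esub> r \<otimes>\<^bsub>G\<^esub> s = inv\<^bsub>G\<^esub> r \<and>
            generate G {r, s} = carrier G)"

definition sylow_subgroup :: "('a, 'b) monoid_scheme \<Rightarrow> nat \<Rightarrow> 'a set \<Rightarrow> bool" where
  "sylow_subgroup G p P \<longleftrightarrow> subgroup P G \<and> card P = p ^ multiplicity p (order G)"

end

theory Submission
  imports Defs
begin

(* For involutions x and y with product z = x y, conjugation by x inverts z, so
   <x, y> = <z> \<union> <z> x, and x \<notin> <z> because x and y are nontrivial; hence |<x, y>| = 2 ord z.
   If G = <a, b>, r = a b and ord r = 2^k m with m = 2 j + 1 odd, then for c = r^j the
   conjugate b' = c^-1 b c satisfies a b' = r^j (a b) r^j = r^m, an element of order 2^k.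
   So <a, b'> has order 2^(k+1), the full power of 2 dividing |G| = 2 ord r. *)

lemma (in group) conjugation_hom:
  assumes "g \<in> carrier G"
  shows "(\<lambda>h. g \<otimes> h \<otimes> inv g) \<in> hom G G"
  using assms by (auto simp: hom_def m_assoc inv_solve_left)

lemma (in group) int_pow_conj_inverted:
  assumes g: "g \<in> carrier G" and z: "z \<in> carrier G" and inverts: "g \<otimes> z \<otimes> inv g = inv z"
  shows "g \<otimes> z [^] (i::int) \<otimes> inv g = z [^] (- i)"
proof -
  have "g \<otimes> z [^] i \<otimes> inv g = (g \<otimes> z \<otimes> inv g) [^] i"
    using hom_int_pow[OF conjugation_hom[OF g] z is_group is_group] .
  then show ?thesis
    using inverts z by (simp add: int_pow_inv int_pow_neg)
qed

lemma (in group) reflection_int_pow: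
  assumes x: "x \<in> carrier G" "x \<otimes> x = \<one>" and z: "z \<in> carrier G"
    and reflects: "x \<otimes> z \<otimes> x = inv z"
  shows "x \<otimes> z [^] (i::int) = z [^] (- i) \<otimes> x"
proof -
  have inv_x: "inv x = x"
    using x by (simp add: inv_equality)
  have "x \<otimes> z [^] i \<otimes> x = z [^] (- i)"
    using int_pow_conj_inverted[OF x(1) z] reflects inv_x by simp
  then have "x \<otimes> z [^] i \<otimes> x \<otimes> x = z [^] (- i) \<otimes> x"
    by simp
  then show ?thesis
    using x z by (simp add: m_assoc)
qed

lemma (in group) involutions_reflect_product:
  assumes "x \<in> carrier G" "x \<otimes> x = \<one>" "y \<in> carrier G" "y \<otimes> y = \<one>"
  shows "x \<otimes> (x \<otimes> y) \<otimes> x = inv (x \<otimes> y)"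
  using assms by (simp add: inv_mult_group inv_equality m_assoc flip: m_assoc[of x x])

lemma (in group) reflection_int_pow_rcos:
  assumes x: "x \<in> carrier G" "x \<otimes> x = \<one>" and z: "z \<in> carrier G"
    and reflects: "x \<otimes> z \<otimes> x = inv z"
  shows "x \<otimes> (z [^] (i::int) \<otimes> x) = z [^] (- i)"
  using x z by (simp add: m_assoc[symmetric] reflection_int_pow[OF x z reflects])
    (simp add: m_assoc)

lemma (in group) reflection_rcos_square:
  assumes x: "x \<in> carrier G" "x \<otimes> x = \<one>" and z: "z \<in> carrier G"
    and reflects: "x \<otimes> z \<otimes> x = inv z"
  shows "(z [^] (i::int) \<otimes> x) \<otimes> (z [^] i \<otimes> x) = \<one>"
  using x z by (simp add: m_assoc reflection_int_pow_rcos[OF x z reflects])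
    (simp flip: int_pow_mult)

lemma (in group) subgroup_cyclic_union_rcos:
  assumes x: "x \<in> carrier G" "x \<otimes> x = \<one>" and z: "z \<in> carrier G"
    and reflects: "x \<otimes> z \<otimes> x = inv z"
  shows "subgroup (generate G {z} \<union> (generate G {z} #> x)) G"
proof -
  define S where "S = {z [^] (i::int) | i. True} \<union> {z [^] (i::int) \<otimes> x | i. True}"
  have elements: "generate G {z} \<union> (generate G {z} #> x) = S"
    unfolding S_def generate_pow[OF z] r_coset_def by auto
  have S_carrier: "S \<subseteq> carrier G"
    using x z unfolding S_def by auto
  have left_pow: "z [^] i \<otimes> h \<in> S" if "h \<in> S" for i :: int and h
    using that x z unfolding S_def by (auto simp: m_assoc[symmetric] int_pow_mult[symmetric])
  have left_x: "x \<otimes> h \<in> S" if "h \<in> S" for h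
    using that reflection_int_pow[OF x z reflects] reflection_int_pow_rcos[OF x z reflects]
    unfolding S_def by blast
  show ?thesis
    unfolding elements
  proof (rule subgroupI)
    show "S \<subseteq> carrier G" "S \<noteq> {}"
      by (fact S_carrier) (auto simp: S_def)
  next
    fix g assume "g \<in> S"
    then consider i :: int where "g = z [^] i" | i :: int where "g = z [^] i \<otimes> x"
      unfolding S_def by blast
    then show "inv g \<in> S"
    proof cases
      case 1
      then show ?thesis
        using z unfolding S_def by (auto simp flip: int_pow_neg)
    next
      case 2
      then have "inv g = g"
        using x z reflection_rcos_square[OF x z reflects] by (simp add: inv_equality)
      then show ?thesis
        using \<open>g \<in> S\<close> by simp
    qed
  next
    fix g h assume "g \<in> S" "h \<in> S"
    then consider i :: int where "g = z [^] i" | i :: int where "g = z [^] i \<otimes> x"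
      unfolding S_def by blast
    then show "g \<otimes> h \<in> S"
      using left_pow left_x \<open>h \<in> S\<close> S_carrier x z by cases (auto simp: m_assoc)
  qed
qed

lemma (in group) generate_involutions_eq:
  assumes x: "x \<in> carrier G" "x \<otimes> x = \<one>" and y: "y \<in> carrier G" "y \<otimes> y = \<one>"
  shows "generate G {x, y} = generate G {x \<otimes> y} \<union> (generate G {x \<otimes> y} #> x)"
    (is "_ = ?Z \<union> (?Z #> x)")
proof
  have xy: "x \<otimes> y \<in> carrier G"
    using x y by simp
  have Z: "subgroup ?Z G"
    using xy by (intro generate_is_subgroup) simp
  have "x \<in> ?Z #> x"
    using rcos_self[OF x(1) Z] .
  moreover have "inv (x \<otimes> y) \<in> ?Z"
    using subgroup.m_inv_closed[OF Z generate.incl] by blast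
  then have "inv (x \<otimes> y) \<otimes> x \<in> ?Z #> x"
    using rcosI subgroup.subset[OF Z] x by blast
  moreover have "inv (x \<otimes> y) \<otimes> x = y"
    using x y by (simp add: inv_mult_group inv_equality m_assoc)
  ultimately show "generate G {x, y} \<subseteq> ?Z \<union> (?Z #> x)"
    using subgroup_cyclic_union_rcos[OF x xy involutions_reflect_product[OF x y]]
    by (intro generate_subgroup_incl) auto
next
  have H: "subgroup (generate G {x, y}) G"
    using x y by (intro generate_is_subgroup) auto
  have gens: "x \<in> generate G {x, y}" "y \<in> generate G {x, y}"
    by (auto intro: generate.incl)
  then have "?Z \<subseteq> generate G {x, y}"
    using subgroup.m_closed[OF H] by (intro generate_subgroup_incl H) auto
  then show "?Z \<union> (?Z #> x) \<subseteq> generate G {x, y}"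
    using subgroup.m_closed[OF H] gens(1) by (auto simp: r_coset_def)
qed

lemma (in group) involution_notin_generate_product:
  assumes x: "involution G x" and y: "involution G y"
  shows "x \<notin> generate G {x \<otimes> y}"
proof
  define z where "z = x \<otimes> y"
  have x': "x \<in> carrier G" "x \<otimes> x = \<one>" "x \<noteq> \<one>"
    and y': "y \<in> carrier G" "y \<otimes> y = \<one>" "y \<noteq> \<one>"
    using x y by (auto simp: involution_def)
  have z: "z \<in> carrier G"
    using x' y' z_def by simp
  assume "x \<in> generate G {x \<otimes> y}"
  then obtain k :: int where k: "x = z [^] k"
    using generate_pow[OF z] z_def by auto
  txt \<open>As a power of z, x commutes with z; since x also inverts z, z has order at most 2.\<close>
  have "x \<otimes> z = z \<otimes> x"
    using int_pow_mult[OF z, of k 1] int_pow_mult[OF z, of 1 k] k z by (simp add: add.commute)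
  then have "inv z = z"
    using involutions_reflect_product[OF x'(1,2) y'(1,2)] x'(1,2) z
    by (simp add: z_def[symmetric] m_assoc)
  then have "subgroup {\<one>, z} G"
    using z by (intro subgroupI) (auto, metis r_inv)
  then have "generate G {z} \<subseteq> {\<one>, z}"
    by (intro generate_subgroup_incl) simp
  then have "x = z"
    using k generate_pow[OF z] x'(3) by blast
  then show False
    using x' y' z_def by simp
qed

lemma (in group) card_generate_involutions:
  assumes fin: "finite (carrier G)" and x: "involution G x" and y: "involution G y"
  shows "card (generate G {x, y}) = 2 * ord (x \<otimes> y)"
proof -
  let ?Z = "generate G {x \<otimes> y}"
  have x': "x \<in> carrier G" "x \<otimes> x = \<one>" and y': "y \<in> carrier G" "y \<otimes> y = \<one>"
    using x y by (auto simp: involution_def)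
  have xy: "x \<otimes> y \<in> carrier G"
    using x' y' by simp
  have Z: "subgroup ?Z G"
    using xy by (intro generate_is_subgroup) simp
  have rcos: "?Z #> g \<in> rcosets ?Z" if "g \<in> carrier G" for g
    using rcosetsI[OF subgroup.subset[OF Z] that] .
  have "?Z \<in> rcosets ?Z"
    using rcos[OF one_closed] coset_mult_one[OF subgroup.subset[OF Z]] by simp
  moreover have "?Z \<noteq> ?Z #> x"
    using rcos_self[OF x'(1) Z] involution_notin_generate_product[OF x y] by auto
  ultimately have "?Z \<inter> (?Z #> x) = {}"
    using rcos_disjoint[OF Z] rcos[OF x'(1)] unfolding pairwise_def disjnt_def by blast
  moreover have "card (?Z #> x) = card ?Z"
    using card_rcosets_equal[OF rcosetsI[OF subgroup.subset[OF Z] x'(1)] subgroup.subset[OF Z]] ..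
  moreover have "finite ?Z" "finite (?Z #> x)"
    using fin subgroup.subset[OF Z] r_coset_subset_G[OF subgroup.subset[OF Z] x'(1)]
    by (auto intro: finite_subset)
  ultimately have "card (?Z \<union> (?Z #> x)) = 2 * card ?Z"
    by (simp add: card_Un_disjoint)
  then show ?thesis
    using generate_involutions_eq[OF x' y'] generate_pow_card[OF xy] by simp
qed

lemma (in group) involution_conj:
  assumes b: "involution G b" and c: "c \<in> carrier G"
  shows "involution G (inv c \<otimes> b \<otimes> c)"
proof -
  have b': "b \<in> carrier G" "b \<noteq> \<one>" "b \<otimes> b = \<one>"
    using b by (auto simp: involution_def)
  have cancel: "c \<otimes> (inv c \<otimes> w) = w" if "w \<in> carrier G" for w
    using c that by (simp add: m_assoc[symmetric])
  have "(inv c \<otimes> b \<otimes> c) \<otimes> (inv c \<otimes> b \<otimes> c) = inv c \<otimes> (b \<otimes> b) \<otimes> c"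
    using b'(1) c by (simp add: m_assoc cancel)
  also have "\<dots> = \<one>"
    using b' c by simp
  finally have "(inv c \<otimes> b \<otimes> c) \<otimes> (inv c \<otimes> b \<otimes> c) = \<one>" .
  moreover have "inv c \<otimes> b \<otimes> c \<noteq> \<one>"
    using b' c by (simp add: m_assoc inv_solve_left')
  ultimately show ?thesis
    using b'(1) c by (simp add: involution_def)
qed

lemma (in group) reflection_times_conj_pow:
  assumes a: "a \<in> carrier G" "a \<otimes> a = \<one>" and b: "b \<in> carrier G" "b \<otimes> b = \<one>"
  shows "a \<otimes> (inv ((a \<otimes> b) [^] (j::nat)) \<otimes> b \<otimes> (a \<otimes> b) [^] j) = (a \<otimes> b) [^] (2 * j + 1)"
proof -
  define r where "r = a \<otimes> b"
  have r: "r \<in> carrier G"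
    using a b r_def by simp
  have "a \<otimes> inv (r [^] j) = r [^] j \<otimes> a"
    using reflection_int_pow[OF a r, of "- int j"] involutions_reflect_product[OF a b] r
    by (simp add: r_def int_pow_neg_int int_pow_int)
  then have "a \<otimes> (inv (r [^] j) \<otimes> b \<otimes> r [^] j) = r [^] j \<otimes> r \<otimes> r [^] j"
    using a b r by (simp add: r_def m_assoc flip: m_assoc[of a "inv _"])
  also have "\<dots> = r [^] (2 * j + 1)"
    using nat_pow_mult[OF r, of "Suc j" j] r by (simp add: mult_2 del: nat_pow_Suc)
  finally show ?thesis
    unfolding r_def .
qed

lemma (in group) ord_pow_cofactor:
  assumes "x \<in> carrier G" "ord x = d * m" "m > 0"
  shows "ord (x [^] m) = d"
  using assms by (simp add: ord_pow_gen)

lemma (in group) exists_conj_generate_sylow_2: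
  assumes fin: "finite (carrier G)" and a: "involution G a" and b: "involution G b"
    and gen: "generate G {a, b} = carrier G"
  shows "\<exists>c \<in> carrier G. sylow_subgroup G 2 (generate G {a, inv c \<otimes> b \<otimes> c})"
proof -
  have a': "a \<in> carrier G" "a \<otimes> a = \<one>" and b': "b \<in> carrier G" "b \<otimes> b = \<one>"
    using a b by (auto simp: involution_def)
  define r where "r = a \<otimes> b"
  have r: "r \<in> carrier G"
    using a' b' r_def by simp
  have order: "order G = 2 * ord r"
    using card_generate_involutions[OF fin a b] gen by (simp add: order_def r_def)
  obtain m where m: "ord r = 2 ^ multiplicity 2 (ord r) * m" "odd m"
    using multiplicity_decompose'[of "ord r" 2] ord_ge_1[OF fin r] by force
  then obtain j where j: "ord r = 2 ^ multiplicity 2 (ord r) * (2 * j + 1)"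
    by (metis oddE)
  define c where "c = r [^] j"
  have c: "c \<in> carrier G"
    using r c_def by simp
  have "card (generate G {a, inv c \<otimes> b \<otimes> c}) = 2 * ord (r [^] (2 * j + 1))"
    using card_generate_involutions[OF fin a involution_conj[OF b c]]
      reflection_times_conj_pow[OF a' b'] by (simp add: c_def r_def)
  also have "\<dots> = 2 ^ multiplicity 2 (order G)"
    using ord_pow_cofactor[OF r j] order multiplicity_times_same[of "ord r" 2] ord_ge_1[OF fin r]
    by simp
  finally have "sylow_subgroup G 2 (generate G {a, inv c \<otimes> b \<otimes> c})"
    using a' b' c by (simp add: sylow_subgroup_def generate_is_subgroup)
  then show ?thesis
    using c by blast
qed

theorem lemma2p2:
  fixes G :: "('a, 'b) monoid_scheme" and a b :: 'a
  assumes "finite_dihedral_group G"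
    and "involution G a" and "involution G b"
    and "generate G {a, b} = carrier G"
  shows "\<exists>c \<in> carrier G.
           sylow_subgroup G 2 (generate G {a, inv\<^bsub>G\<^esub> c \<otimes>\<^bsub>G\<^esub> b \<otimes>\<^bsub>G\<^esub> c})"
  using group.exists_conj_generate_sylow_2[of G a b] assms
  by (simp add: finite_dihedral_group_def)

end
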